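(* Let $p$ be an odd prime and $G=\langle a,b : (a[a^p,b])^p,\ b^p\rangle$. Then for every $i\geq1$, $G/\gamma_i(G)\cong (C_p*C_p)/\gamma_i(C_p*C_p)$; that is, $G$ is weakly para-$(C_p*C_p)$.
   Context: Commutator convention: $[x,y]=x^{-1}y^{-1}xy$. $C_p*C_p=\langle a,b:a^p,b^p\rangle$. Lower central series: $\gamma_1(G)=G$, $\gamma_k(G)=[G,\gamma_{k-1}(G)]$. *)

theory Defs
  imports "HOL-Algebra.Algebra"
begin

datatype gen = GA | GB

(* Letters: (x, True) is x, (x, False) is x^{-1}.  Words are lists of letters. *)
type_synonym 'g word = "('g \<times> bool) list"

fun red_push :: "'g \<times> bool \<Rightarrow> 'g word \<Rightarrow> 'g word" where
  "red_push x [] = [x]"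
| "red_push x (y # ys) = (if fst x = fst y \<and> snd x \<noteq> snd y then ys else x # y # ys)"

definition reduce :: "'g word \<Rightarrow> 'g word" where
  "reduce w = foldr red_push w []"

definition word_inv :: "'g word \<Rightarrow> 'g word" where
  "word_inv w = rev (map (\<lambda>(x, s). (x, \<not> s)) w)"

definition free_grp :: "('g word) monoid" where
  "free_grp = \<lparr> carrier = {w. reduce w = w}, monoid.mult = (\<lambda>u v. reduce (u @ v)), one = [] \<rparr>"

definition gen_elt :: "'g \<Rightarrow> 'g word" where
  "gen_elt x = [(x, True)]"

(* Commutator convention [x,y] = x^{-1} y^{-1} x y *)
definition comm :: "('a, 'b) monoid_scheme \<Rightarrow> 'a \<Rightarrow> 'a \<Rightarrow> 'a" where
  "comm G x y = inv\<^bsub>G\<^esub> x \<otimes>\<^bsub>G\<^esub> inv\<^bsub>G\<^esub> y \<otimes>\<^bsub>G\<^esub> x \<otimes>\<^bsub>G\<^esub> y"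

(* Lower central series: lcs G 1 = G, lcs G (k+1) = [G, lcs G k].
   (lcs G 0 is set to G as well; it is never used.) *)
fun lcs :: "('a, 'b) monoid_scheme \<Rightarrow> nat \<Rightarrow> 'a set" where
  "lcs G 0 = carrier G"
| "lcs G (Suc 0) = carrier G"
| "lcs G (Suc (Suc k)) =
     generate G {comm G x y | x y. x \<in> carrier G \<and> y \<in> lcs G (Suc k)}"

definition normal_closure :: "('a, 'b) monoid_scheme \<Rightarrow> 'a set \<Rightarrow> 'a set" where
  "normal_closure G R =
     generate G {g \<otimes>\<^bsub>G\<^esub> r \<otimes>\<^bsub>G\<^esub> inv\<^bsub>G\<^esub> g | g r. g \<in> carrier G \<and> r \<in> R}"

definition presented :: "'g word set \<Rightarrow> ('g word set) monoid" where
  "presented R = free_grp Mod normal_closure free_grp R"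

definition a_gen :: "gen word" where "a_gen = gen_elt GA"
definition b_gen :: "gen word" where "b_gen = gen_elt GB"

definition CpCp :: "nat \<Rightarrow> (gen word set) monoid" where
  "CpCp p = presented {a_gen [^]\<^bsub>free_grp\<^esub> p, b_gen [^]\<^bsub>free_grp\<^esub> p}"

definition Gp :: "nat \<Rightarrow> (gen word set) monoid" where
  "Gp p = presented
     {(a_gen \<otimes>\<^bsub>free_grp\<^esub> comm free_grp (a_gen [^]\<^bsub>free_grp\<^esub> p) b_gen) [^]\<^bsub>free_grp\<^esub> p,
      b_gen [^]\<^bsub>free_grp\<^esub> p}"

end

theory Submission
  imports Defs
begin

(*
  Let F be the free group on a, b, let r = (a [a^p, b])^p, and let
  N_G, N_C be the normal closures of {r, b^p} and {a^p, b^p}, so that Gp p = F/N_G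
  and CpCp p = F/N_C.  For a normal subgroup N of F, the quotient (F/N)/gamma_i(F/N)
  is isomorphic to F/(N gamma_i(F)), where N gamma_i(F) is the preimage of gamma_i(F/N).
  It therefore suffices to show N_G gamma_i(F) = N_C gamma_i(F), i.e. that each of
  N_G, N_C lies in the other's product with gamma_i(F).  Two facts about a group
  with elements a, b do this:
    (1) if a^p = 1 then r = 1, since [1, b] = 1;
    (2) if r = 1 then a^p lies in every term of the lower central series: if
        a^p is in gamma_k, then [a^p, b] is in gamma_(k+1), so a^p = (a [a^p, b])^p = 1
        modulo gamma_(k+1).
  Applied in F/N_C resp. F/N_G, (1) gives N_G <= N_C and (2) gives a^p in N_G gamma_i(F).
*)

definition letter_inv :: "'g \<times> bool \<Rightarrow> 'g \<times> bool" where
  "letter_inv x = (fst x, \<not> snd x)"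

fun reduced :: "'g word \<Rightarrow> bool" where
  "reduced [] = True"
| "reduced [x] = True"
| "reduced (x # y # ys) = (y \<noteq> letter_inv x \<and> reduced (y # ys))"

lemma letter_inv_letter_inv [simp]: "letter_inv (letter_inv x) = x"
  by (simp add: letter_inv_def)

lemma red_push_Cons: "red_push x (y # ys) = (if y = letter_inv x then ys else x # y # ys)"
  by (cases x; cases y) (auto simp: letter_inv_def)

declare red_push.simps(2) [simp del]
declare red_push_Cons [simp]

lemma reduce_Nil [simp]: "reduce [] = []"
  by (simp add: reduce_def)

lemma reduce_Cons: "reduce (x # w) = red_push x (reduce w)"
  by (simp add: reduce_def)

lemma reduce_append: "reduce (u @ v) = foldr red_push u (reduce v)"
  by (simp add: reduce_def)

lemma reduced_tl: "reduced (x # w) \<Longrightarrow> reduced w"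
  by (cases w) auto

lemma reduced_red_push: "reduced w \<Longrightarrow> reduced (red_push x w)"
proof (cases w)
  case (Cons y ys)
  assume "reduced w"
  then show ?thesis using Cons by (cases ys) auto
qed simp

lemma reduced_foldr: "reduced w \<Longrightarrow> reduced (foldr red_push u w)"
  by (induction u) (auto intro: reduced_red_push)

lemma reduced_reduce: "reduced (reduce w)"
  unfolding reduce_def by (rule reduced_foldr) simp

lemma reduce_reduced: "reduced w \<Longrightarrow> reduce w = w"
proof (induction w)
  case (Cons x w)
  then have "reduce w = w" using reduced_tl by blast
  then show ?case using Cons.prems by (cases w) (auto simp: reduce_Cons)
qed simp

lemma red_push_cancel: "reduced w \<Longrightarrow> red_push (letter_inv x) (red_push x w) = w"
proof (cases w)
  case (Cons y ys)
  assume "reduced w"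
  then show ?thesis using Cons by (cases ys) auto
qed simp

(* Pushing onto a reduced word commutes with pushing onto the word being pushed;
   hence a word may be reduced before it is pushed (foldr_reduce), which is
   the heart of associativity. *)
lemma foldr_red_push: "reduced w \<Longrightarrow>
   foldr red_push (red_push x r) w = red_push x (foldr red_push r w)"
proof (cases r)
  case (Cons y ys)
  assume w: "reduced w"
  have "red_push x (red_push (letter_inv x) (foldr red_push ys w)) = foldr red_push ys w"
    using red_push_cancel[OF reduced_foldr[OF w], of "letter_inv x"] by simp
  then show ?thesis using Cons by auto
qed simp

lemma foldr_reduce: "reduced w \<Longrightarrow> foldr red_push (reduce u) w = foldr red_push u w"
  by (induction u) (simp_all add: reduce_Cons foldr_red_push)

lemma foldr_word_inv: "reduced w \<Longrightarrow> foldr red_push (word_inv u) (foldr red_push u w) = w"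
proof (induction u)
  case (Cons x u)
  have "word_inv (x # u) = word_inv u @ [letter_inv x]"
    by (cases x) (simp add: word_inv_def letter_inv_def)
  then show ?case using Cons by (simp add: red_push_cancel reduced_foldr)
qed (simp add: word_inv_def)

lemma free_carrier: "carrier free_grp = {w. reduced w}"
  by (auto simp: free_grp_def reduce_reduced) (metis reduced_reduce)

lemma free_mult: "u \<otimes>\<^bsub>free_grp\<^esub> v = reduce (u @ v)"
  by (simp add: free_grp_def)

lemma free_one: "\<one>\<^bsub>free_grp\<^esub> = []"
  by (simp add: free_grp_def)

(* Free reduction makes reduced words a group; the inverse of x is the
   reduction of its formal inverse. *)
lemma group_free_grp: "group (free_grp :: 'g word monoid)"
proof (rule groupI)
  fix x y z :: "'g word"
  assume "x \<in> carrier free_grp" "y \<in> carrier free_grp" "z \<in> carrier free_grp"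
  then have y: "reduced y" and z: "reduced z" by (auto simp: free_carrier)
  show "x \<otimes>\<^bsub>free_grp\<^esub> y \<in> carrier free_grp"
    by (simp add: free_carrier free_mult reduced_reduce)
  have "reduce (reduce (x @ y) @ z) = foldr red_push (reduce (x @ y)) z"
    using z by (simp add: reduce_append reduce_reduced)
  also have "\<dots> = foldr red_push x (foldr red_push y z)"
    using z by (simp add: foldr_reduce)
  also have "\<dots> = reduce (x @ reduce (y @ z))"
    using z by (simp add: reduce_append reduce_reduced reduced_foldr)
  finally show "x \<otimes>\<^bsub>free_grp\<^esub> y \<otimes>\<^bsub>free_grp\<^esub> z = x \<otimes>\<^bsub>free_grp\<^esub> (y \<otimes>\<^bsub>free_grp\<^esub> z)"
    by (simp add: free_mult)
next
  show "\<one>\<^bsub>free_grp\<^esub> \<in> carrier free_grp"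
    by (simp add: free_one free_carrier)
next
  fix x :: "'g word"
  assume "x \<in> carrier free_grp"
  then have x: "reduced x" by (simp add: free_carrier)
  then show "\<one>\<^bsub>free_grp\<^esub> \<otimes>\<^bsub>free_grp\<^esub> x = x"
    by (simp add: free_one free_mult reduce_reduced)
  have "reduce (reduce (word_inv x) @ x) = foldr red_push (word_inv x) (foldr red_push x [])"
    using x by (simp add: reduce_append reduce_reduced foldr_reduce flip: reduce_def)
  also have "\<dots> = []" by (simp add: foldr_word_inv)
  finally show "\<exists>y\<in>carrier free_grp. y \<otimes>\<^bsub>free_grp\<^esub> x = \<one>\<^bsub>free_grp\<^esub>"
    by (auto simp: free_carrier free_mult free_one intro!: bexI[of _ "reduce (word_inv x)"]
        reduced_reduce)
qed

lemma gen_elt_carrier: "gen_elt x \<in> carrier free_grp"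
  by (simp add: gen_elt_def free_carrier)

context group begin

lemma comm_closed [simp]: "x \<in> carrier G \<Longrightarrow> y \<in> carrier G \<Longrightarrow> comm G x y \<in> carrier G"
  by (simp add: comm_def)

lemma comm_conj:
  assumes "g \<in> carrier G" "x \<in> carrier G" "y \<in> carrier G"
  shows "g \<otimes> comm G x y \<otimes> inv g = comm G (g \<otimes> x \<otimes> inv g) (g \<otimes> y \<otimes> inv g)"
proof -
  have cancel: "inv u \<otimes> (u \<otimes> v) = v" "u \<otimes> (inv u \<otimes> v) = v"
    if "u \<in> carrier G" "v \<in> carrier G" for u v
    using that by (simp_all add: m_assoc[symmetric])
  show ?thesis using assms by (simp add: comm_def m_assoc inv_mult_group cancel)
qed

lemma comm_inv: "x \<in> carrier G \<Longrightarrow> y \<in> carrier G \<Longrightarrow> inv (comm G x y) = comm G y x"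
  by (simp add: comm_def m_assoc inv_mult_group)

lemma comm_one_left [simp]: "y \<in> carrier G \<Longrightarrow> comm G \<one> y = \<one>"
  by (simp add: comm_def)

end

lemma hom_comm:
  assumes "group G" "group H" "h \<in> hom G H" "x \<in> carrier G" "y \<in> carrier G"
  shows "h (comm G x y) = comm H (h x) (h y)"
proof -
  interpret group_hom G H h using assms by (simp add: group_hom_def group_hom_axioms_def)
  show ?thesis using assms by (simp add: comm_def)
qed

lemma lcs_step:
  "k \<ge> 1 \<Longrightarrow> lcs G (Suc k) = generate G {comm G x y | x y. x \<in> carrier G \<and> y \<in> lcs G k}"
  by (cases k) auto

context group begin

lemma lcs_normal: "lcs G k \<lhd> G"
proof (induction k)
  case (Suc k)
  show ?case
  proof (cases "k = 0")
    case False
    let ?S = "{comm G x y | x y. x \<in> carrier G \<and> y \<in> lcs G k}"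
    have sub: "lcs G k \<subseteq> carrier G"
      using Suc.IH normal_imp_subgroup subgroup.subset by blast
    have "generate G ?S \<lhd> G"
    proof (rule normal_generateI)
      show "?S \<subseteq> carrier G" using sub by auto
    next
      fix h g assume "h \<in> ?S" and g: "g \<in> carrier G"
      then obtain x y where xy: "h = comm G x y" "x \<in> carrier G" "y \<in> lcs G k" by blast
      have "g \<otimes> y \<otimes> inv g \<in> lcs G k" using normal.inv_op_closed2[OF Suc.IH g xy(3)] .
      then show "g \<otimes> h \<otimes> inv g \<in> ?S" using xy g sub comm_conj[of g x y] by auto
    qed
    then show ?thesis using False by (simp add: lcs_step)
  qed (simp add: normal_self)
qed (simp add: normal_self)

lemma lcs_subgroup: "subgroup (lcs G k) G"
  using lcs_normal normal_imp_subgroup by blast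

lemma lcs_carrier: "lcs G k \<subseteq> carrier G"
  using lcs_subgroup subgroup.subset by blast

lemma comm_in_lcs:
  assumes "x \<in> carrier G" "y \<in> lcs G k"
  shows "comm G x y \<in> lcs G (Suc k)"
proof (cases "k = 0")
  case True
  then show ?thesis using assms by simp
next
  case False
  then show ?thesis using assms by (auto simp: lcs_step intro: generate.incl)
qed

lemma comm_in_lcs_left:
  assumes "x \<in> lcs G k" "y \<in> carrier G"
  shows "comm G x y \<in> lcs G (Suc k)"
proof -
  have "inv (comm G y x) \<in> lcs G (Suc k)"
    using subgroup.m_inv_closed[OF lcs_subgroup comm_in_lcs[OF assms(2,1)]] .
  moreover have "x \<in> carrier G" using assms(1) lcs_carrier by blast
  ultimately show ?thesis using assms(2) comm_inv by simp
qed

end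

lemma lcs_surj:
  assumes "group G" "group H" "h \<in> hom G H" "h ` carrier G = carrier H"
  shows "h ` lcs G k = lcs H k"
proof (induction k)
  case (Suc k)
  show ?case
  proof (cases "k = 0")
    case False
    interpret gh: group_hom G H h
      using assms by (simp add: group_hom_def group_hom_axioms_def)
    let ?S = "\<lambda>G. {comm G x y | x y. x \<in> carrier G \<and> y \<in> lcs G k}"
    have sub: "?S G \<subseteq> carrier G"
      using group.lcs_carrier[OF assms(1)] group.comm_closed[OF assms(1)] by blast
    have "h ` ?S G = ?S H"
    proof (intro equalityI subsetI)
      fix z assume "z \<in> h ` ?S G"
      then obtain x y where xy: "z = h (comm G x y)" "x \<in> carrier G" "y \<in> lcs G k" by blast
      then have "y \<in> carrier G" using group.lcs_carrier[OF assms(1)] by blast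
      then show "z \<in> ?S H" using xy hom_comm[OF assms(1-3)] Suc.IH by (auto intro!: exI)
    next
      fix z assume "z \<in> ?S H"
      then obtain x y where z: "z = comm H x y" "x \<in> carrier H" "y \<in> lcs H k" by blast
      obtain x' where x': "x' \<in> carrier G" "x = h x'" using z assms(4) by blast
      obtain y' where y': "y' \<in> lcs G k" "y = h y'" using z Suc.IH by blast
      have "y' \<in> carrier G" using y' group.lcs_carrier[OF assms(1)] by blast
      then have "z = h (comm G x' y')" using hom_comm[OF assms(1-3) x'(1)] x' y' z by simp
      then show "z \<in> h ` ?S G" using x' y' by blast
    qed
    then show ?thesis using gh.generate_img[OF sub] False by (simp add: lcs_step)
  qed (use assms in simp)
qed (use assms in simp)

context group begin

lemma normal_closure_normal:
  assumes "R \<subseteq> carrier G" shows "normal_closure G R \<lhd> G"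
  unfolding normal_closure_def
proof (rule normal_generateI)
  show "{g \<otimes> r \<otimes> inv g |g r. g \<in> carrier G \<and> r \<in> R} \<subseteq> carrier G" using assms by auto
next
  fix h g assume "h \<in> {g \<otimes> r \<otimes> inv g |g r. g \<in> carrier G \<and> r \<in> R}" and g: "g \<in> carrier G"
  then obtain g' r where h: "h = g' \<otimes> r \<otimes> inv g'" "g' \<in> carrier G" "r \<in> R" by blast
  have "r \<in> carrier G" using h assms by auto
  then have "g \<otimes> h \<otimes> inv g = (g \<otimes> g') \<otimes> r \<otimes> inv (g \<otimes> g')"
    using h g by (simp add: m_assoc inv_mult_group)
  then show "g \<otimes> h \<otimes> inv g \<in> {g \<otimes> r \<otimes> inv g |g r. g \<in> carrier G \<and> r \<in> R}"
    using h g by blast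
qed

lemma normal_closure_incl:
  assumes "R \<subseteq> carrier G" shows "R \<subseteq> normal_closure G R"
proof
  fix r assume r: "r \<in> R"
  then have "r = \<one> \<otimes> r \<otimes> inv \<one>" using assms by auto
  then have "r \<in> {g \<otimes> r \<otimes> inv g |g r. g \<in> carrier G \<and> r \<in> R}" using r by blast
  then show "r \<in> normal_closure G R" unfolding normal_closure_def by (rule generate.incl)
qed

lemma normal_closure_min:
  assumes "K \<lhd> G" "R \<subseteq> K" shows "normal_closure G R \<subseteq> K"
  unfolding normal_closure_def
proof (rule generate_subgroup_incl)
  show "subgroup K G" using assms normal_imp_subgroup by blast
  show "{g \<otimes> r \<otimes> inv g |g r. g \<in> carrier G \<and> r \<in> R} \<subseteq> K"
  proof
    fix z assume "z \<in> {g \<otimes> r \<otimes> inv g |g r. g \<in> carrier G \<and> r \<in> R}"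
    then obtain g r where "z = g \<otimes> r \<otimes> inv g" "g \<in> carrier G" "r \<in> R" by blast
    then show "z \<in> K" using normal.inv_op_closed2[OF assms(1)] assms(2) by auto
  qed
qed

end

context normal begin

lemma quotient_map_hom: "group_hom G (G Mod H) (\<lambda>x. H #> x)"
  using r_coset_hom_Mod factorgroup_is_group is_group
  by (simp add: group_hom_def group_hom_axioms_def)

lemma quotient_map_trivial_iff: "x \<in> carrier G \<Longrightarrow> H #> x = \<one>\<^bsub>G Mod H\<^esub> \<longleftrightarrow> x \<in> H"
proof -
  assume x: "x \<in> carrier G"
  have "H #> x = H \<longleftrightarrow> x \<in> H"
    using coset_join1[OF _ x subgroup_axioms] coset_join2[OF x subgroup_axioms] by blast
  then show ?thesis by simp
qed

lemma lcs_quotient_image: "(\<lambda>x. H #> x) ` lcs G k = lcs (G Mod H) k"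
  by (rule lcs_surj[OF is_group factorgroup_is_group r_coset_hom_Mod])
    (simp add: carrier_FactGroup)

end

definition relator :: "('a, 'b) monoid_scheme \<Rightarrow> nat \<Rightarrow> 'a \<Rightarrow> 'a \<Rightarrow> 'a" where
  "relator G p a b = (a \<otimes>\<^bsub>G\<^esub> comm G (a [^]\<^bsub>G\<^esub> p) b) [^]\<^bsub>G\<^esub> p"

lemma hom_relator:
  assumes "group G" "group H" "h \<in> hom G H" "a \<in> carrier G" "b \<in> carrier G"
  shows "h (relator G p a b) = relator H p (h a) (h b)"
proof -
  interpret group_hom G H h using assms by (simp add: group_hom_def group_hom_axioms_def)
  have "comm G (a [^]\<^bsub>G\<^esub> p) b \<in> carrier G" using assms by simp
  then show ?thesis using assms
    by (simp add: relator_def hom_nat_pow hom_mult hom_comm[OF assms(1-3)])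
qed

context group begin

lemma relator_closed [simp]: "a \<in> carrier G \<Longrightarrow> b \<in> carrier G \<Longrightarrow> relator G p a b \<in> carrier G"
  by (simp add: relator_def)

lemma relator_trivial:
  "a \<in> carrier G \<Longrightarrow> b \<in> carrier G \<Longrightarrow> a [^] p = \<one> \<Longrightarrow> relator G p a b = \<one>"
  by (simp add: relator_def)

(* Fact (2): where the relator is trivial, a^p lies in every gamma_k: modulo
   gamma_(k+1) the commutator [a^p, b] vanishes, so a^p = (a [a^p, b])^p = 1. *)
lemma relator_forces_lcs:
  assumes a: "a \<in> carrier G" and b: "b \<in> carrier G" and r: "relator G p a b = \<one>"
  shows "a [^] p \<in> lcs G k"
proof (induction k)
  case 0
  then show ?case using a by simp
next
  case (Suc k)
  let ?L = "lcs G (Suc k)"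
  let ?c = "comm G (a [^] p) b"
  interpret L: normal ?L G by (rule lcs_normal)
  interpret \<pi>: group_hom G "G Mod ?L" "\<lambda>x. ?L #> x" by (rule L.quotient_map_hom)
  have c: "?c \<in> carrier G" using a b by simp
  have c_trivial: "?L #> ?c = \<one>\<^bsub>G Mod ?L\<^esub>"
    using L.quotient_map_trivial_iff[OF c] comm_in_lcs_left[OF Suc.IH b] by blast
  have "?L #> (a \<otimes> ?c) = (?L #> a) \<otimes>\<^bsub>G Mod ?L\<^esub> (?L #> ?c)"
    by (rule \<pi>.hom_mult[OF a c])
  also have "\<dots> = ?L #> a"
    unfolding c_trivial by (rule \<pi>.H.r_one[OF \<pi>.hom_closed[OF a]])
  finally have ac: "?L #> (a \<otimes> ?c) = ?L #> a" .
  have "?L #> (a [^] p) = (?L #> (a \<otimes> ?c)) [^]\<^bsub>G Mod ?L\<^esub> p"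
    unfolding ac by (rule \<pi>.hom_nat_pow[OF a])
  also have "\<dots> = ?L #> relator G p a b"
    unfolding relator_def by (rule \<pi>.hom_nat_pow[symmetric]) (use a c in simp)
  also have "\<dots> = \<one>\<^bsub>G Mod ?L\<^esub>"
    unfolding r by (rule \<pi>.hom_one)
  finally show ?case using L.quotient_map_trivial_iff a by blast
qed

end

(* The preimage of gamma_k(G/N) in G, i.e. the product N gamma_k(G). *)
definition lcs_preimage :: "('a, 'b) monoid_scheme \<Rightarrow> 'a set \<Rightarrow> nat \<Rightarrow> 'a set" where
  "lcs_preimage G N k = {x \<in> carrier G. N #>\<^bsub>G\<^esub> x \<in> lcs (G Mod N) k}"

context normal begin

(* N gamma_k(G) is the kernel of G -> (G/N)/gamma_k(G/N), which is onto; so it is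
   normal and (G/N)/gamma_k(G/N) is isomorphic to G/(N gamma_k(G)). *)
lemma lcs_preimage_normal_iso:
  shows "lcs_preimage G H k \<lhd> G"
    and "G Mod lcs_preimage G H k \<cong> (G Mod H) Mod lcs (G Mod H) k"
proof -
  let ?Q = "G Mod H"
  let ?L = "lcs ?Q k"
  let ?f = "\<lambda>x. ?L #>\<^bsub>?Q\<^esub> (H #> x)"
  interpret Q: group ?Q by (rule factorgroup_is_group)
  interpret L: normal ?L ?Q by (rule Q.lcs_normal)
  have "?f \<in> hom G (?Q Mod ?L)"
    using Group.hom_compose[OF r_coset_hom_Mod L.r_coset_hom_Mod] unfolding comp_def .
  then interpret f: group_hom G "?Q Mod ?L" ?f
    using L.factorgroup_is_group is_group by (simp add: group_hom_def group_hom_axioms_def)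
  have "H #> x \<in> carrier ?Q" if "x \<in> carrier G" for x
    using that by (simp add: carrier_FactGroup)
  then have ker: "kernel G (?Q Mod ?L) ?f = lcs_preimage G H k"
    using L.quotient_map_trivial_iff unfolding kernel_def lcs_preimage_def by auto
  have surj: "?f ` carrier G = carrier (?Q Mod ?L)"
    by (simp only: carrier_FactGroup image_image)
  show "lcs_preimage G H k \<lhd> G" using f.normal_kernel unfolding ker .
  show "G Mod lcs_preimage G H k \<cong> ?Q Mod ?L" using f.FactGroup_iso[OF surj] unfolding ker .
qed

lemma subgroup_sub_lcs_preimage: "H \<subseteq> lcs_preimage G H k"
proof
  fix x assume x: "x \<in> H"
  have "H #> x = \<one>\<^bsub>G Mod H\<^esub>" using quotient_map_trivial_iff x by auto
  moreover have "\<one>\<^bsub>G Mod H\<^esub> \<in> lcs (G Mod H) k"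
    using subgroup.one_closed[OF group.lcs_subgroup[OF factorgroup_is_group]] .
  ultimately show "x \<in> lcs_preimage G H k" using x by (simp add: lcs_preimage_def)
qed

lemma lcs_sub_lcs_preimage: "lcs G k \<subseteq> lcs_preimage G H k"
proof
  fix x assume x: "x \<in> lcs G k"
  then have "x \<in> carrier G" using lcs_carrier by blast
  moreover have "H #> x \<in> lcs (G Mod H) k" using x lcs_quotient_image by blast
  ultimately show "x \<in> lcs_preimage G H k" by (simp add: lcs_preimage_def)
qed

lemma lcs_preimage_decomp:
  assumes "x \<in> lcs_preimage G H k"
  shows "\<exists>g \<in> lcs G k. x \<otimes> inv g \<in> H"
proof -
  have x: "x \<in> carrier G" and "H #> x \<in> lcs (G Mod H) k"
    using assms by (auto simp: lcs_preimage_def)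
  then obtain g where g: "g \<in> lcs G k" "H #> x = H #> g"
    using lcs_quotient_image by (metis imageE)
  have "x \<in> H #> g" using rcos_self[OF x subgroup_axioms] g(2) by simp
  then show ?thesis using rcos_module_imp[OF is_group] g lcs_carrier by blast
qed

lemma relator_in_subgroup:
  assumes a: "a \<in> carrier G" and b: "b \<in> carrier G" and "a [^] p \<in> H"
  shows "relator G p a b \<in> H"
proof -
  interpret \<pi>: group_hom G "G Mod H" "\<lambda>x. H #> x" by (rule quotient_map_hom)
  have "H #> (a [^] p) = \<one>\<^bsub>G Mod H\<^esub>"
    using quotient_map_trivial_iff assms by simp
  then have "(H #> a) [^]\<^bsub>G Mod H\<^esub> p = \<one>\<^bsub>G Mod H\<^esub>"
    using \<pi>.hom_nat_pow[OF a] by simp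
  then have "relator (G Mod H) p (H #> a) (H #> b) = \<one>\<^bsub>G Mod H\<^esub>"
    by (rule \<pi>.H.relator_trivial[OF \<pi>.hom_closed[OF a] \<pi>.hom_closed[OF b]])
  then have "H #> relator G p a b = \<one>\<^bsub>G Mod H\<^esub>"
    using hom_relator[OF is_group factorgroup_is_group r_coset_hom_Mod a b] by simp
  then show ?thesis using quotient_map_trivial_iff a b by simp
qed

lemma power_in_lcs_preimage:
  assumes a: "a \<in> carrier G" and b: "b \<in> carrier G" and "relator G p a b \<in> H"
  shows "a [^] p \<in> lcs_preimage G H k"
proof -
  interpret \<pi>: group_hom G "G Mod H" "\<lambda>x. H #> x" by (rule quotient_map_hom)
  have "H #> relator G p a b = \<one>\<^bsub>G Mod H\<^esub>"
    using quotient_map_trivial_iff assms by simp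
  then have "relator (G Mod H) p (H #> a) (H #> b) = \<one>\<^bsub>G Mod H\<^esub>"
    using hom_relator[OF is_group factorgroup_is_group r_coset_hom_Mod a b] by simp
  then have "(H #> a) [^]\<^bsub>G Mod H\<^esub> p \<in> lcs (G Mod H) k"
    by (rule \<pi>.H.relator_forces_lcs[OF \<pi>.hom_closed[OF a] \<pi>.hom_closed[OF b]])
  then show ?thesis using a \<pi>.hom_nat_pow by (simp add: lcs_preimage_def)
qed

end

context group begin

lemma lcs_preimage_mono:
  assumes N: "N \<lhd> G" and N': "N' \<lhd> G" and sub: "N \<subseteq> lcs_preimage G N' k"
  shows "lcs_preimage G N k \<subseteq> lcs_preimage G N' k"
proof
  fix x assume "x \<in> lcs_preimage G N k"
  then obtain g where g: "g \<in> lcs G k" "x \<otimes> inv g \<in> N"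
    using normal.lcs_preimage_decomp[OF N] by blast
  have M': "subgroup (lcs_preimage G N' k) G"
    using normal.lcs_preimage_normal_iso(1)[OF N'] normal_imp_subgroup by blast
  have "x \<in> carrier G" "g \<in> carrier G"
    using \<open>x \<in> lcs_preimage G N k\<close> g(1) lcs_carrier by (auto simp: lcs_preimage_def)
  then have "x = (x \<otimes> inv g) \<otimes> g" by (simp add: m_assoc)
  also have "\<dots> \<in> lcs_preimage G N' k"
    using subgroup.m_closed[OF M'] g sub normal.lcs_sub_lcs_preimage[OF N'] by blast
  finally show "x \<in> lcs_preimage G N' k" .
qed

lemma lcs_quotients_iso:
  assumes N: "N \<lhd> G" and N': "N' \<lhd> G"
    and "N \<subseteq> lcs_preimage G N' k" and "N' \<subseteq> lcs_preimage G N k"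
  shows "(G Mod N) Mod lcs (G Mod N) k \<cong> (G Mod N') Mod lcs (G Mod N') k"
proof -
  have eq: "lcs_preimage G N k = lcs_preimage G N' k"
    using lcs_preimage_mono[OF N N'] lcs_preimage_mono[OF N' N] assms(3,4) by blast
  have "(G Mod N) Mod lcs (G Mod N) k \<cong> G Mod lcs_preimage G N k"
    using group.iso_sym[OF normal.factorgroup_is_group] normal.lcs_preimage_normal_iso[OF N]
    by blast
  also have "\<dots> \<cong> (G Mod N') Mod lcs (G Mod N') k"
    unfolding eq by (rule normal.lcs_preimage_normal_iso(2)[OF N'])
  finally show ?thesis .
qed

end

theorem mainTheorem12:
  fixes p :: nat and i :: nat
  assumes "Factorial_Ring.prime p" and "odd p" and "i \<ge> 1"
  shows "(Gp p) Mod (lcs (Gp p) i) \<cong> (CpCp p) Mod (lcs (CpCp p) i)"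
proof -
  let ?F = "free_grp :: gen word monoid"
  interpret F: group ?F by (rule group_free_grp)
  have a: "a_gen \<in> carrier ?F" and b: "b_gen \<in> carrier ?F"
    by (simp_all add: a_gen_def b_gen_def gen_elt_carrier)
  let ?RG = "{relator ?F p a_gen b_gen, b_gen [^]\<^bsub>?F\<^esub> p}"
  let ?RC = "{a_gen [^]\<^bsub>?F\<^esub> p, b_gen [^]\<^bsub>?F\<^esub> p}"
  have RG: "?RG \<subseteq> carrier ?F" and RC: "?RC \<subseteq> carrier ?F" using a b by simp_all
  define NG where "NG = normal_closure ?F ?RG"
  define NC where "NC = normal_closure ?F ?RC"
  interpret NG: normal NG ?F unfolding NG_def by (rule F.normal_closure_normal[OF RG])
  interpret NC: normal NC ?F unfolding NC_def by (rule F.normal_closure_normal[OF RC])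
  have incl: "?RG \<subseteq> NG" "?RC \<subseteq> NC"
    unfolding NG_def NC_def using F.normal_closure_incl RG RC by blast+
  have "NG \<subseteq> NC"
    unfolding NG_def using NC.relator_in_subgroup[OF a b] incl(2)
    by (intro F.normal_closure_min[OF NC.normal_axioms]) auto
  then have G_in_C: "NG \<subseteq> lcs_preimage ?F NC i"
    using NC.subgroup_sub_lcs_preimage by blast
  have C_in_G: "NC \<subseteq> lcs_preimage ?F NG i"
    unfolding NC_def using NG.power_in_lcs_preimage[OF a b] NG.subgroup_sub_lcs_preimage incl(1)
    by (intro F.normal_closure_min[OF NG.lcs_preimage_normal_iso(1)]) auto
  have "(?F Mod NG) Mod lcs (?F Mod NG) i \<cong> (?F Mod NC) Mod lcs (?F Mod NC) i"
    by (rule F.lcs_quotients_iso[OF NG.normal_axioms NC.normal_axioms G_in_C C_in_G])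
  then show ?thesis by (simp add: Gp_def CpCp_def presented_def NG_def NC_def relator_def)
qed

end
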